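(* Let $X$, $(S_n)$ be as in the context and assume Assumption (A) holds. Let $\nu\in \mathcal M_+(W_S)$ be a quasi-stationary distribution such that $\nu(\eta_S)>0$ and such that $\nu\{x:\ j_S(x)\leq \ell\}=1$ for some $\ell\geq 0$. Then the exponential absorption parameter of $\nu$ equals $\theta_{0,S}$.
   Context: Let $D$ be a measurable space, $\partial\notin D$, and $(X_n)_{n\in\mathbb Z_+}$ a Markov chain on $D\cup\{\partial\}$ for which $\partial$ is absorbing; $\tau_\partial=\inf\{n\ge0: X_n=\partial\}$; $\mathbb P_x,\mathbb E_x$ denote law and expectation given $X_0=x$, and $\mathbb P_\mu=\int\mathbb P_x\,\mu(dx)$. The sub-Markovian semigroup is $S_nf(x)=\mathbb E_x(f(X_n)\mathbbm 1_{n<\tau_\partial})$, $\mu S_nf=\int S_nf\,d\mu$. Functions are extended by $0$ outside their domain. $\mathcal M_+(D)$: finite nonnegative measures on $D$. For measurable $W:D\to[1,\infty)$, $\mathcal M(W)$ is the space of finite signed measures with $|\mu|(W)<\infty$, norm $\|\mu\|_W=|\mu|(W)$; $\mathcal M_+(W)$ its nonnegative part; $L^\infty(W)$: measurable $f$ with $\|f\|_W=\sup|f|/W<\infty$. $\theta_S(\mu):=\inf\{\theta\ge0:\liminf_n\theta^{-n}\mu S_n\mathbbm 1_D=0\}$, $\theta_S(x)=\theta_S(\delta_x)$, $\theta_{0,S}=\sup_x\theta_S(x)$; $j_S(\mu):=\inf\{\ell\ge0:\liminf_n n^{-\ell}\theta_{0,S}^{-n}\mu S_n\mathbbm 1_D=0\}$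 (with $\inf\emptyset=0$), $j_S(x)=j_S(\delta_x)$. A quasi-stationary distribution (QSD) is a probability measure $\nu$ on $D$ with $\mathbb P_\nu(X_n\in\cdot\mid n<\tau_\partial)=\nu$ for all $n\ge0$; then there is $\theta\in(0,1]$ with $\mathbb P_\nu(n<\tau_\partial)=\theta^n$ for all $n$, i.e. $\nu S_n=\theta^n\nu$; $\theta$ is its exponential absorption (convergence) parameter. Assumption (A): $\theta_{0,S}\in(0,1]$, $j_S$ is integer valued, and there exist a measurable $W_S:D\to[1,\infty)$, a finite or countable set $I_S$, probability measures $\nu_{S,i}\in\mathcal M(W_S)$ and non-identically zero nonnegative $\eta_{S,i}\in L^\infty(W_S)$ ($i\in I_S$) with $\sum_{i}\eta_{S,i}\nu_{S,i}(W_S)\in L^\infty(W_S)$, and $\alpha_{S,n}\to0$, such that for all $f\in L^\infty(W_S)$, $n\ge1$, $x\in D$: $\big|\theta_{0,S}^{-n}n^{-j_S(x)}\mathbb E_x(f(X_n)\mathbbm 1_{n<\tau_\partial})-\sum_{i}\eta_{S,i}(x)\nu_{S,i}(f)\big|\le\alpha_{S,n}W_S(x)\|f\|_{W_S}$. Then $\eta_S:=\sum_{i\in I_S}\eta_{S,i}$. *)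

theory Defs
  imports "HOL-Probability.Probability"
begin

text \<open>Markov chain on the state space M (= D plus the cemetery point c), given by a
transition kernel K.  The n-step law of X_n under P_x is kstep M K n x.\<close>

primrec kstep :: "'a measure \<Rightarrow> ('a \<Rightarrow> 'a measure) \<Rightarrow> nat \<Rightarrow> 'a \<Rightarrow> 'a measure" where
  "kstep M K 0 x = return M x"
| "kstep M K (Suc n) x = bind (kstep M K n x) K"

definition markov_absorbing :: "'a measure \<Rightarrow> ('a \<Rightarrow> 'a measure) \<Rightarrow> 'a \<Rightarrow> bool" where
  "markov_absorbing M K c \<longleftrightarrow> K \<in> M \<rightarrow>\<^sub>M prob_algebra M \<and> c \<in> space M \<and> {c} \<in> sets M
     \<and> K c = return M c"

definition Dom :: "'a measure \<Rightarrow> 'a \<Rightarrow> 'a set" where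
  "Dom M c = space M - {c}"

text \<open>Sub-Markovian semigroup: S_n f(x) = E_x(f(X_n) 1_{n<tau}); since c is absorbing,
n < tau iff X_n is in D.\<close>
definition Sg :: "'a measure \<Rightarrow> ('a \<Rightarrow> 'a measure) \<Rightarrow> 'a \<Rightarrow> nat \<Rightarrow> ('a \<Rightarrow> real) \<Rightarrow> 'a \<Rightarrow> real" where
  "Sg M K c n f x = (\<integral>y. indicator (Dom M c) y * f y \<partial>(kstep M K n x))"

text \<open>mu S_n 1_D = P_mu(n < tau).\<close>
definition mass :: "'a measure \<Rightarrow> ('a \<Rightarrow> 'a measure) \<Rightarrow> 'a \<Rightarrow> 'a measure \<Rightarrow> nat \<Rightarrow> real" where
  "mass M K c \<mu> n = (\<integral>x. Sg M K c n (\<lambda>_. 1) x \<partial>\<mu>)"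

text \<open>theta_S(mu).  theta^{-n} for theta = 0 is read as +infinity; restricting to theta > 0
does not change the infimum.\<close>
definition thetaS :: "'a measure \<Rightarrow> ('a \<Rightarrow> 'a measure) \<Rightarrow> 'a \<Rightarrow> 'a measure \<Rightarrow> real" where
  "thetaS M K c \<mu> = Inf {\<theta>::real. \<theta> > 0 \<and>
      liminf (\<lambda>n. ereal (mass M K c \<mu> n / \<theta> ^ n)) = 0}"

definition theta0 :: "'a measure \<Rightarrow> ('a \<Rightarrow> 'a measure) \<Rightarrow> 'a \<Rightarrow> real" where
  "theta0 M K c = (SUP x\<in>Dom M c. thetaS M K c (return M x))"

definition jS :: "'a measure \<Rightarrow> ('a \<Rightarrow> 'a measure) \<Rightarrow> 'a \<Rightarrow> 'a measure \<Rightarrow> real" where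
  "jS M K c \<mu> = (let L = {l::real. l \<ge> 0 \<and>
      liminf (\<lambda>n. ereal (real n powr (-l) * mass M K c \<mu> n / theta0 M K c ^ n)) = 0}
     in if L = {} then 0 else Inf L)"

definition LinfW :: "'a measure \<Rightarrow> 'a \<Rightarrow> ('a \<Rightarrow> real) \<Rightarrow> ('a \<Rightarrow> real) \<Rightarrow> bool" where
  "LinfW M c W f \<longleftrightarrow> f \<in> borel_measurable M \<and> (\<exists>C. \<forall>x\<in>Dom M c. \<bar>f x\<bar> \<le> C * W x)"

definition normW :: "'a measure \<Rightarrow> 'a \<Rightarrow> ('a \<Rightarrow> real) \<Rightarrow> ('a \<Rightarrow> real) \<Rightarrow> real" where
  "normW M c W f = (SUP x\<in>Dom M c. \<bar>f x\<bar> / W x)"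

text \<open>M_+(W): finite nonnegative measures on D (measures on M charging no mass at c)
with mu(W) finite.\<close>
definition MplusW :: "'a measure \<Rightarrow> 'a \<Rightarrow> ('a \<Rightarrow> real) \<Rightarrow> 'a measure \<Rightarrow> bool" where
  "MplusW M c W \<mu> \<longleftrightarrow> sets \<mu> = sets M \<and> finite_measure \<mu> \<and> emeasure \<mu> {c} = 0
     \<and> (\<integral>\<^sup>+ x. ennreal (W x) \<partial>\<mu>) < \<infinity>"

text \<open>Quasi-stationary distribution: P_nu(X_n in A | n < tau) = nu(A) for all n.\<close>
definition qsd :: "'a measure \<Rightarrow> ('a \<Rightarrow> 'a measure) \<Rightarrow> 'a \<Rightarrow> 'a measure \<Rightarrow> bool" where
  "qsd M K c \<nu> \<longleftrightarrow> sets \<nu> = sets M \<and> prob_space \<nu> \<and> emeasure \<nu> {c} = 0 \<and>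
     (\<forall>n. mass M K c \<nu> n > 0 \<and>
        (\<forall>A\<in>sets M. A \<subseteq> Dom M c \<longrightarrow>
           (\<integral>x. Sg M K c n (indicator A) x \<partial>\<nu>) / mass M K c \<nu> n = measure \<nu> A))"

definition assumption_A :: "'a measure \<Rightarrow> ('a \<Rightarrow> 'a measure) \<Rightarrow> 'a \<Rightarrow> ('a \<Rightarrow> real) \<Rightarrow> 'i set
     \<Rightarrow> ('i \<Rightarrow> 'a measure) \<Rightarrow> ('i \<Rightarrow> 'a \<Rightarrow> real) \<Rightarrow> (nat \<Rightarrow> real) \<Rightarrow> bool" where
  "assumption_A M K c W I \<nu>s \<eta> \<alpha> \<longleftrightarrow>
     0 < theta0 M K c \<and> theta0 M K c \<le> 1 \<and>
     (\<forall>x\<in>Dom M c. \<exists>k::nat. jS M K c (return M x) = real k) \<and>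
     W \<in> borel_measurable M \<and> (\<forall>x\<in>Dom M c. 1 \<le> W x) \<and>
     countable I \<and>
     (\<forall>i\<in>I. prob_space (\<nu>s i) \<and> MplusW M c W (\<nu>s i)) \<and>
     (\<forall>i\<in>I. LinfW M c W (\<eta> i) \<and> (\<forall>x\<in>Dom M c. 0 \<le> \<eta> i x) \<and> (\<exists>x\<in>Dom M c. \<eta> i x \<noteq> 0)) \<and>
     LinfW M c W (\<lambda>x. infsum (\<lambda>i. \<eta> i x * (\<integral>y. W y \<partial>(\<nu>s i))) I) \<and>
     \<alpha> \<longlonglongrightarrow> 0 \<and>
     (\<forall>f n x. LinfW M c W f \<longrightarrow> 1 \<le> n \<longrightarrow> x \<in> Dom M c \<longrightarrow>
        integrable (kstep M K n x) (\<lambda>y. indicator (Dom M c) y * f y) \<and>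
        \<bar>inverse (theta0 M K c ^ n) * real n powr (- jS M K c (return M x)) * Sg M K c n f x
          - infsum (\<lambda>i. \<eta> i x * (\<integral>y. f y \<partial>(\<nu>s i))) I\<bar>
        \<le> \<alpha> n * W x * normW M c W f)"

definition etaS :: "'i set \<Rightarrow> ('i \<Rightarrow> 'a \<Rightarrow> real) \<Rightarrow> 'a \<Rightarrow> real" where
  "etaS I \<eta> x = infsum (\<lambda>i. \<eta> i x) I"

end

theory Submission
  imports Defs "HOL-Real_Asymp.Real_Asymp"
begin

(* Quasi-stationarity makes the law of X\<^sub>n on D equal to P\<^sub>\<nu>(n < \<tau>) \<nu>, so the survival mass is
multiplicative: P\<^sub>\<nu>(n < \<tau>) = \<theta>\<^sup>n.  Integrating the estimate of Assumption (A) for f = 1 against \<nu>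
squeezes (\<theta>/\<theta>\<^sub>0)\<^sup>n between \<nu>(\<eta>\<^sub>S) - o(1), using j\<^sub>S \<ge> 0, and n\<^sup>l (\<nu>(\<eta>\<^sub>S) + o(1)), using
j\<^sub>S \<le> l \<nu>-a.e.  As \<nu>(\<eta>\<^sub>S) > 0, the lower bound rules out \<theta> < \<theta>\<^sub>0 and the upper one \<theta> > \<theta>\<^sub>0. *)

lemma markov_absorbingD:
  assumes "markov_absorbing M K c"
  shows "K \<in> M \<rightarrow>\<^sub>M prob_algebra M" "c \<in> space M" "{c} \<in> sets M" "K c = return M c"
  using assms by (simp_all add: markov_absorbing_def)

lemma sets_Dom: "{c} \<in> sets M \<Longrightarrow> Dom M c \<in> sets M"
  unfolding Dom_def by auto

lemma AE_in_Dom: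
  assumes "sets \<nu> = sets M" "{c} \<in> sets M" "emeasure \<nu> {c} = 0"
  shows "AE x in \<nu>. x \<in> Dom M c"
proof -
  have "{c} \<in> null_sets \<nu>" using assms by (auto intro: null_setsI)
  from AE_not_in[OF this] AE_space show ?thesis
    by eventually_elim (use sets_eq_imp_space_eq[OF assms(1)] in \<open>auto simp: Dom_def\<close>)
qed

lemma kstep_measurable:
  assumes K: "K \<in> M \<rightarrow>\<^sub>M prob_algebra M"
  shows "kstep M K n \<in> M \<rightarrow>\<^sub>M prob_algebra M"
proof (induction n)
  case 0
  have "kstep M K 0 = return M" by (rule ext) simp
  then show ?case by simp
next
  case (Suc n)
  have "kstep M K (Suc n) = (\<lambda>x. kstep M K n x \<bind> K)" by (rule ext) simp
  then show ?case using measurable_bind_prob_space[OF Suc K] by simp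
qed

lemma
  assumes "K \<in> M \<rightarrow>\<^sub>M prob_algebra M" "x \<in> space M"
  shows prob_space_kstep: "prob_space (kstep M K n x)"
    and sets_kstep: "sets (kstep M K n x) = sets M"
  using measurable_space[OF kstep_measurable[OF assms(1)] assms(2)]
  by (simp_all add: space_prob_algebra)

lemma Sg_indicator:
  assumes "K \<in> M \<rightarrow>\<^sub>M prob_algebra M" "x \<in> space M" "A \<in> sets M" "A \<subseteq> Dom M c"
  shows "Sg M K c n (indicator A) x = measure (kstep M K n x) A"
proof -
  have "Sg M K c n (indicator A) x = (\<integral>y. indicator A y \<partial>kstep M K n x)"
    unfolding Sg_def using assms(4) by (intro Bochner_Integration.integral_cong) (auto split: split_indicator)
  then show ?thesis using assms by (simp add: sets_kstep prob_space_kstep)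
qed

lemma Sg_one_eq_Sg_indicator_Dom: "Sg M K c n (\<lambda>_. 1) = Sg M K c n (indicator (Dom M c))"
  unfolding Sg_def by (intro ext Bochner_Integration.integral_cong) (auto split: split_indicator)

lemma Sg_one_nonneg: "0 \<le> Sg M K c n (\<lambda>_. 1) x"
  unfolding Sg_def by simp

lemma integrable_Sg_indicator:
  assumes K: "K \<in> M \<rightarrow>\<^sub>M prob_algebra M" and \<nu>: "sets \<nu> = sets M" "finite_measure \<nu>"
    and A: "A \<in> sets M" "A \<subseteq> Dom M c"
  shows "integrable \<nu> (Sg M K c n (indicator A))"
proof -
  interpret finite_measure \<nu> by fact
  have "(\<lambda>x. measure (kstep M K n x) A) \<in> borel_measurable \<nu>"
    using measurable_prob_algebraD[OF kstep_measurable[OF K]] A(1)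
    by (simp add: measurable_cong_sets[OF \<nu>(1) refl])
  then have "integrable \<nu> (\<lambda>x. measure (kstep M K n x) A)"
    using sets_eq_imp_space_eq[OF \<nu>(1)]
    by (intro integrable_const_bound[where B=1]) (auto simp: K prob_space_kstep prob_space.prob_le_1)
  moreover have "integrable \<nu> (Sg M K c n (indicator A)) \<longleftrightarrow> integrable \<nu> (\<lambda>x. measure (kstep M K n x) A)"
    using sets_eq_imp_space_eq[OF \<nu>(1)]
    by (intro Bochner_Integration.integrable_cong) (auto simp: Sg_indicator K A)
  ultimately show ?thesis by simp
qed

lemma integral_Sg_indicator:
  assumes K: "K \<in> M \<rightarrow>\<^sub>M prob_algebra M" and \<nu>: "sets \<nu> = sets M" "prob_space \<nu>"
    and A: "A \<in> sets M" "A \<subseteq> Dom M c"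
  shows "(\<integral>x. Sg M K c n (indicator A) x \<partial>\<nu>) = measure (\<nu> \<bind> kstep M K n) A"
proof -
  interpret prob_space \<nu> by fact
  have "(\<integral>x. Sg M K c n (indicator A) x \<partial>\<nu>) = (\<integral>x. measure (kstep M K n x) A \<partial>\<nu>)"
    using sets_eq_imp_space_eq[OF \<nu>(1)]
    by (intro Bochner_Integration.integral_cong) (auto simp: Sg_indicator K A)
  also have "\<dots> = measure (\<nu> \<bind> kstep M K n) A"
    using measurable_prob_algebraD[OF kstep_measurable[OF K]] A(1)
    by (intro measure_bind[symmetric]) (simp_all add: measurable_cong_sets[OF \<nu>(1) refl])
  finally show ?thesis .
qed

lemma mass_eq_measure_bind:
  assumes "K \<in> M \<rightarrow>\<^sub>M prob_algebra M" "{c} \<in> sets M" "sets \<nu> = sets M" "prob_space \<nu>"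
  shows "mass M K c \<nu> n = measure (\<nu> \<bind> kstep M K n) (Dom M c)"
  unfolding mass_def Sg_one_eq_Sg_indicator_Dom using assms
  by (intro integral_Sg_indicator) (simp_all add: sets_Dom)

lemma
  assumes "K \<in> M \<rightarrow>\<^sub>M prob_algebra M" "sets \<nu> = sets M" "prob_space \<nu>"
  shows prob_space_bind_kstep: "prob_space (\<nu> \<bind> kstep M K n)"
    and sets_bind_kstep: "sets (\<nu> \<bind> kstep M K n) = sets M"
proof -
  have "\<nu> \<in> space (prob_algebra M)" using assms(2,3) by (simp add: space_prob_algebra)
  then show "prob_space (\<nu> \<bind> kstep M K n)" "sets (\<nu> \<bind> kstep M K n) = sets M"
    using prob_space_bind' sets_bind' kstep_measurable[OF assms(1)] by blast+
qed

lemma bind_kstep_0: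
  assumes "sets \<nu> = sets M"
  shows "\<nu> \<bind> kstep M K 0 = \<nu>"
proof -
  have "kstep M K 0 = return M" by (rule ext) simp
  then show ?thesis using bind_return''[OF assms] by simp
qed

lemma bind_kstep_Suc:
  assumes K: "K \<in> M \<rightarrow>\<^sub>M prob_algebra M" and \<nu>: "sets \<nu> = sets M"
  shows "\<nu> \<bind> kstep M K (Suc n) = (\<nu> \<bind> kstep M K n) \<bind> K"
proof -
  have "kstep M K (Suc n) = (\<lambda>x. kstep M K n x \<bind> K)" by (rule ext) simp
  moreover have "kstep M K n \<in> \<nu> \<rightarrow>\<^sub>M subprob_algebra M"
    using measurable_prob_algebraD[OF kstep_measurable[OF K]]
    by (simp add: measurable_cong_sets[OF \<nu> refl])
  ultimately show ?thesis using bind_assoc measurable_prob_algebraD[OF K] by metis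
qed

lemma mass_0:
  assumes K: "K \<in> M \<rightarrow>\<^sub>M prob_algebra M" and c: "{c} \<in> sets M"
    and \<nu>: "sets \<nu> = sets M" "prob_space \<nu>" "emeasure \<nu> {c} = 0"
  shows "mass M K c \<nu> 0 = 1"
proof -
  have "{c} \<in> null_sets \<nu>" using \<nu> c by (auto intro: null_setsI)
  have "mass M K c \<nu> 0 = measure \<nu> (space \<nu> - {c})"
    using mass_eq_measure_bind[OF K c \<nu>(1,2), of 0] sets_eq_imp_space_eq[OF \<nu>(1)]
    by (simp add: bind_kstep_0[OF \<nu>(1)] Dom_def)
  also have "\<dots> = measure \<nu> (space \<nu>)"
    using \<open>{c} \<in> null_sets \<nu>\<close> by (intro measure_Diff_null_set) simp_all
  finally show ?thesis using \<nu>(2) by (simp add: prob_space.prob_space)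
qed

lemma emeasure_bind_Dom:
  assumes chain: "markov_absorbing M K c" and P: "sets P = sets M" "prob_space P"
  shows "emeasure (P \<bind> K) (Dom M c) = (\<integral>\<^sup>+y. emeasure (K y) (Dom M c) \<partial>density P (indicator (Dom M c)))"
proof -
  note K = markov_absorbingD(1)[OF chain] and D = sets_Dom[OF markov_absorbingD(3)[OF chain]]
  have "emeasure (P \<bind> K) (Dom M c) = (\<integral>\<^sup>+y. emeasure (K y) (Dom M c) \<partial>P)"
    using P by (intro emeasure_bind_prob_algebra[OF _ K D]) (simp add: space_prob_algebra)
  also have "\<dots> = (\<integral>\<^sup>+y. indicator (Dom M c) y * emeasure (K y) (Dom M c) \<partial>P)"
  proof (intro nn_integral_cong)
    fix y assume y: "y \<in> space P"
    show "emeasure (K y) (Dom M c) = indicator (Dom M c) y * emeasure (K y) (Dom M c)"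
    proof (cases "y \<in> Dom M c")
      case False
      then have "y = c" using y by (simp add: Dom_def sets_eq_imp_space_eq[OF P(1)])
      then show ?thesis using markov_absorbingD(4)[OF chain] D by (simp add: emeasure_return Dom_def)
    qed simp
  qed
  also have "\<dots> = (\<integral>\<^sup>+y. emeasure (K y) (Dom M c) \<partial>density P (indicator (Dom M c)))"
    using measurable_prob_algebraD[OF K] D
    by (subst nn_integral_density) (simp_all add: measurable_cong_sets[OF P(1) refl])
  finally show ?thesis .
qed

lemma qsd_measure_bind_kstep:
  assumes K: "K \<in> M \<rightarrow>\<^sub>M prob_algebra M" and \<nu>: "qsd M K c \<nu>"
    and A: "A \<in> sets M" "A \<subseteq> Dom M c"
  shows "measure (\<nu> \<bind> kstep M K n) A = mass M K c \<nu> n * measure \<nu> A"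
proof -
  have "sets \<nu> = sets M" "prob_space \<nu>" "0 < mass M K c \<nu> n"
    and "(\<integral>x. Sg M K c n (indicator A) x \<partial>\<nu>) / mass M K c \<nu> n = measure \<nu> A"
    using \<nu> A by (auto simp: qsd_def)
  then show ?thesis using integral_Sg_indicator[OF K _ _ A] by (simp add: field_simps)
qed

lemma qsd_restrict_bind_kstep:
  assumes K: "K \<in> M \<rightarrow>\<^sub>M prob_algebra M" and c: "{c} \<in> sets M" and q: "qsd M K c \<nu>"
  shows "density (\<nu> \<bind> kstep M K n) (indicator (Dom M c))
    = scale_measure (ennreal (mass M K c \<nu> n)) \<nu>"
proof (rule measure_eqI)
  have \<nu>: "sets \<nu> = sets M" "prob_space \<nu>" "emeasure \<nu> {c} = 0" and m: "0 < mass M K c \<nu> n"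
    using q by (auto simp: qsd_def)
  interpret \<nu>: prob_space \<nu> by fact
  let ?P = "\<nu> \<bind> kstep M K n"
  interpret P: prob_space ?P using prob_space_bind_kstep[OF K \<nu>(1,2)] .
  show "sets (density ?P (indicator (Dom M c))) = sets (scale_measure (ennreal (mass M K c \<nu> n)) \<nu>)"
    by (simp add: sets_bind_kstep[OF K \<nu>(1,2)] \<nu>(1))
  fix A assume "A \<in> sets (density ?P (indicator (Dom M c)))"
  then have A: "A \<in> sets M" by (simp add: sets_bind_kstep[OF K \<nu>(1,2)])
  have "{c} \<in> null_sets \<nu>" using \<nu> c by (auto intro: null_setsI)
  moreover have "Dom M c \<inter> A = A - {c}" using sets.sets_into_space[OF A] by (auto simp: Dom_def)
  ultimately have \<nu>_A: "measure \<nu> (Dom M c \<inter> A) = measure \<nu> A"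
    using A by (simp add: measure_Diff_null_set \<nu>(1))
  have "emeasure (density ?P (indicator (Dom M c))) A = emeasure ?P (Dom M c \<inter> A)"
    using A c by (intro emeasure_restricted) (simp_all add: sets_bind_kstep[OF K \<nu>(1,2)] sets_Dom)
  also have "\<dots> = ennreal (mass M K c \<nu> n * measure \<nu> A)"
    using A sets_Dom[OF c] \<nu>_A qsd_measure_bind_kstep[OF K q, of "Dom M c \<inter> A"]
    by (simp add: P.emeasure_eq_measure)
  also have "\<dots> = emeasure (scale_measure (ennreal (mass M K c \<nu> n)) \<nu>) A"
    using m by (simp add: ennreal_mult \<nu>.emeasure_eq_measure)
  finally show "emeasure (density ?P (indicator (Dom M c))) A
    = emeasure (scale_measure (ennreal (mass M K c \<nu> n)) \<nu>) A" .
qed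

lemma qsd_mass_Suc:
  assumes chain: "markov_absorbing M K c" and q: "qsd M K c \<nu>"
  shows "mass M K c \<nu> (Suc n) = mass M K c \<nu> n * mass M K c \<nu> 1"
proof -
  note K = markov_absorbingD(1)[OF chain] and c = markov_absorbingD(3)[OF chain]
  have \<nu>: "sets \<nu> = sets M" "prob_space \<nu>" and m: "\<And>k. 0 < mass M K c \<nu> k"
    using q by (auto simp: qsd_def)
  define P where "P k = \<nu> \<bind> kstep M K k" for k
  define g where "g y = emeasure (K y) (Dom M c)" for y
  have P: "sets (P k) = sets M" "prob_space (P k)" for k
    unfolding P_def using prob_space_bind_kstep sets_bind_kstep K \<nu> by blast+
  have g: "g \<in> borel_measurable \<nu>"
    unfolding g_def using measurable_prob_algebraD[OF K] sets_Dom[OF c]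
    by (simp add: measurable_cong_sets[OF \<nu>(1) refl])
  have mass_P: "ennreal (mass M K c \<nu> k) = emeasure (P k) (Dom M c)" for k
    using mass_eq_measure_bind[OF K c \<nu>] P(2)
    by (simp add: P_def prob_space_def finite_measure.emeasure_eq_measure)
  have "emeasure (P (Suc n)) (Dom M c) = (\<integral>\<^sup>+y. g y \<partial>density (P n) (indicator (Dom M c)))"
    unfolding P_def bind_kstep_Suc[OF K \<nu>(1)] g_def
    using emeasure_bind_Dom[OF chain P[unfolded P_def]] .
  also have "\<dots> = ennreal (mass M K c \<nu> n) * (\<integral>\<^sup>+y. g y \<partial>\<nu>)"
    unfolding P_def qsd_restrict_bind_kstep[OF K c q] using g by (rule nn_integral_scale_measure)
  also have "(\<integral>\<^sup>+y. g y \<partial>\<nu>) = emeasure (P 1) (Dom M c)"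
  proof -
    have "P 1 = \<nu> \<bind> K"
      using bind_kstep_Suc[OF K \<nu>(1), of 0] by (simp add: P_def bind_kstep_0[OF \<nu>(1)])
    then show ?thesis unfolding g_def using \<nu>
      by (simp add: emeasure_bind_prob_algebra[OF _ K sets_Dom[OF c]] space_prob_algebra)
  qed
  finally have "ennreal (mass M K c \<nu> (Suc n)) = ennreal (mass M K c \<nu> n) * ennreal (mass M K c \<nu> 1)"
    by (simp only: mass_P)
  then show ?thesis using m by (simp add: ennreal_mult[symmetric] less_imp_le)
qed

lemma qsd_mass_power:
  assumes chain: "markov_absorbing M K c" and q: "qsd M K c \<nu>"
  shows "mass M K c \<nu> n = mass M K c \<nu> 1 ^ n"
proof (induction n)
  case 0
  have "mass M K c \<nu> 0 = 1"
    using q markov_absorbingD[OF chain] by (intro mass_0) (auto simp: qsd_def)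
  then show ?case by simp
next
  case (Suc n)
  then show ?case by (simp only: qsd_mass_Suc[OF chain q, of n] power_Suc mult.commute)
qed

lemma assumption_AD:
  assumes "assumption_A M K c W I \<nu>s \<eta> \<alpha>"
  shows "0 < theta0 M K c" "theta0 M K c \<le> 1" "W \<in> borel_measurable M"
    "\<And>x. x \<in> Dom M c \<Longrightarrow> 1 \<le> W x" "\<And>x. x \<in> Dom M c \<Longrightarrow> 0 \<le> jS M K c (return M x)"
    "\<alpha> \<longlonglongrightarrow> 0"
proof -
  have j: "\<forall>x\<in>Dom M c. \<exists>k::nat. jS M K c (return M x) = real k"
    using assms by (simp add: assumption_A_def)
  show "0 \<le> jS M K c (return M x)" if "x \<in> Dom M c" for x
    using j that by force
qed (use assms in \<open>simp_all add: assumption_A_def\<close>)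

lemma assumption_A_survival_estimate:
  assumes A: "assumption_A M K c W I \<nu>s \<eta> \<alpha>" and x: "x \<in> Dom M c" and n: "1 \<le> n"
  shows "\<bar>real n powr - jS M K c (return M x) * (Sg M K c n (\<lambda>_. 1) x / theta0 M K c ^ n)
      - etaS I \<eta> x\<bar> \<le> \<alpha> n * normW M c W (\<lambda>_. 1) * W x"
proof -
  have "LinfW M c W (\<lambda>_. 1)"
    using assumption_AD(4)[OF A] by (auto simp: LinfW_def intro!: exI[of _ 1])
  then have "\<bar>inverse (theta0 M K c ^ n) * real n powr (- jS M K c (return M x)) * Sg M K c n (\<lambda>_. 1) x
      - infsum (\<lambda>i. \<eta> i x * (\<integral>y. 1 \<partial>\<nu>s i)) I\<bar> \<le> \<alpha> n * W x * normW M c W (\<lambda>_. 1)"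
    using A x n unfolding assumption_A_def by blast
  moreover have "infsum (\<lambda>i. \<eta> i x * (\<integral>y. 1 \<partial>\<nu>s i)) I = etaS I \<eta> x"
    using A unfolding etaS_def assumption_A_def by (intro infsum_cong) (simp add: prob_space.prob_space)
  ultimately show ?thesis by (simp add: divide_inverse mult_ac)
qed

lemma survival_lower_bound:
  assumes A: "assumption_A M K c W I \<nu>s \<eta> \<alpha>" and x: "x \<in> Dom M c" and n: "1 \<le> n"
  shows "etaS I \<eta> x - \<alpha> n * normW M c W (\<lambda>_. 1) * W x \<le> Sg M K c n (\<lambda>_. 1) x / theta0 M K c ^ n"
proof -
  let ?u = "Sg M K c n (\<lambda>_. 1) x / theta0 M K c ^ n" and ?p = "real n powr - jS M K c (return M x)"
  have "0 \<le> ?u" by (intro divide_nonneg_pos Sg_one_nonneg zero_less_power assumption_AD(1)[OF A])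
  moreover have "?p \<le> 1"
    using n assumption_AD(5)[OF A x] by (simp add: powr_minus_divide ge_one_powr_ge_zero)
  ultimately have "?p * ?u \<le> ?u" by (metis mult_left_le_one_le powr_ge_zero)
  with assumption_A_survival_estimate[OF A x n] show ?thesis by linarith
qed

lemma survival_upper_bound:
  assumes A: "assumption_A M K c W I \<nu>s \<eta> \<alpha>" and x: "x \<in> Dom M c" and n: "1 \<le> n"
    and l: "jS M K c (return M x) \<le> l"
  shows "Sg M K c n (\<lambda>_. 1) x / theta0 M K c ^ n
    \<le> real n powr l * (etaS I \<eta> x + \<alpha> n * normW M c W (\<lambda>_. 1) * W x)"
proof -
  let ?u = "Sg M K c n (\<lambda>_. 1) x / theta0 M K c ^ n" and ?j = "jS M K c (return M x)"
  have "0 \<le> real n powr - ?j * ?u"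
    by (intro mult_nonneg_nonneg divide_nonneg_pos Sg_one_nonneg zero_less_power assumption_AD(1)[OF A]) simp
  have "?u = real n powr ?j * (real n powr - ?j * ?u)"
    using n by (simp add: powr_minus field_simps)
  also have "\<dots> \<le> real n powr l * (real n powr - ?j * ?u)"
    using n l \<open>0 \<le> real n powr - ?j * ?u\<close> by (intro mult_right_mono powr_mono) simp_all
  also have "\<dots> \<le> real n powr l * (etaS I \<eta> x + \<alpha> n * normW M c W (\<lambda>_. 1) * W x)"
    using assumption_A_survival_estimate[OF A x n] by (intro mult_left_mono) simp_all
  finally show ?thesis .
qed

lemma integrable_weight:
  assumes "MplusW M c W \<nu>" "{c} \<in> sets M" "W \<in> borel_measurable M" "\<And>x. x \<in> Dom M c \<Longrightarrow> 0 \<le> W x"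
  shows "integrable \<nu> W"
proof (rule integrableI_nonneg)
  have \<nu>: "sets \<nu> = sets M" "emeasure \<nu> {c} = 0" using assms(1) by (simp_all add: MplusW_def)
  show "W \<in> borel_measurable \<nu>" using assms(3) by (simp add: measurable_cong_sets[OF \<nu>(1) refl])
  show "AE x in \<nu>. 0 \<le> W x" using AE_in_Dom[OF \<nu>(1) assms(2) \<nu>(2)] by eventually_elim (rule assms(4))
  show "(\<integral>\<^sup>+x. ennreal (W x) \<partial>\<nu>) < \<infinity>" using assms(1) by (simp add: MplusW_def)
qed

lemma AE_in_Dom_MplusW:
  assumes "markov_absorbing M K c" "MplusW M c W \<nu>"
  shows "AE x in \<nu>. x \<in> Dom M c"
  using assms by (intro AE_in_Dom) (simp_all add: MplusW_def markov_absorbingD)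

lemma integrable_survival:
  assumes chain: "markov_absorbing M K c" and A: "assumption_A M K c W I \<nu>s \<eta> \<alpha>"
    and \<nu>: "MplusW M c W \<nu>"
  shows "integrable \<nu> W" "integrable \<nu> (Sg M K c n (\<lambda>_. 1))"
proof -
  note c = markov_absorbingD(3)[OF chain]
  show "integrable \<nu> W"
    using integrable_weight[OF \<nu> c] assumption_AD(3,4)[OF A] by fastforce
  have "sets \<nu> = sets M" "finite_measure \<nu>" using \<nu> by (simp_all add: MplusW_def)
  then show "integrable \<nu> (Sg M K c n (\<lambda>_. 1))"
    unfolding Sg_one_eq_Sg_indicator_Dom
    using integrable_Sg_indicator[OF markov_absorbingD(1)[OF chain]] sets_Dom[OF c] by blast
qed

lemma survival_mass_lower_bound:
  assumes chain: "markov_absorbing M K c" and A: "assumption_A M K c W I \<nu>s \<eta> \<alpha>"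
    and \<nu>: "MplusW M c W \<nu>" and \<eta>: "integrable \<nu> (etaS I \<eta>)" and n: "1 \<le> n"
  shows "(\<integral>x. etaS I \<eta> x \<partial>\<nu>) - \<alpha> n * normW M c W (\<lambda>_. 1) * (\<integral>x. W x \<partial>\<nu>)
    \<le> mass M K c \<nu> n / theta0 M K c ^ n"
proof -
  note W = integrable_survival(1)[OF chain A \<nu>] and S = integrable_survival(2)[OF chain A \<nu>]
  have "(\<integral>x. etaS I \<eta> x - \<alpha> n * normW M c W (\<lambda>_. 1) * W x \<partial>\<nu>)
      \<le> (\<integral>x. Sg M K c n (\<lambda>_. 1) x / theta0 M K c ^ n \<partial>\<nu>)"
    using AE_in_Dom_MplusW[OF chain \<nu>]
    by (intro integral_mono_AE) (use \<eta> W S survival_lower_bound[OF A _ n] in auto)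
  then show ?thesis using \<eta> W by (simp add: mass_def)
qed

lemma survival_mass_upper_bound:
  assumes chain: "markov_absorbing M K c" and A: "assumption_A M K c W I \<nu>s \<eta> \<alpha>"
    and \<nu>: "MplusW M c W \<nu>" and \<eta>: "integrable \<nu> (etaS I \<eta>)" and n: "1 \<le> n"
    and l: "AE x in \<nu>. jS M K c (return M x) \<le> l"
  shows "mass M K c \<nu> n / theta0 M K c ^ n
    \<le> real n powr l * ((\<integral>x. etaS I \<eta> x \<partial>\<nu>) + \<alpha> n * normW M c W (\<lambda>_. 1) * (\<integral>x. W x \<partial>\<nu>))"
proof -
  note W = integrable_survival(1)[OF chain A \<nu>] and S = integrable_survival(2)[OF chain A \<nu>]
  have "(\<integral>x. Sg M K c n (\<lambda>_. 1) x / theta0 M K c ^ n \<partial>\<nu>)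
      \<le> (\<integral>x. real n powr l * (etaS I \<eta> x + \<alpha> n * normW M c W (\<lambda>_. 1) * W x) \<partial>\<nu>)"
    using AE_in_Dom_MplusW[OF chain \<nu>] l
    by (intro integral_mono_AE) (use \<eta> W S survival_upper_bound[OF A _ n] in auto)
  then show ?thesis using \<eta> W by (simp add: mass_def)
qed

lemma power_ge_one_if_lower_bound:
  fixes t L :: real and f :: "nat \<Rightarrow> real"
  assumes "0 \<le> t" "f \<longlonglongrightarrow> L" "0 < L" "\<forall>\<^sub>F n in sequentially. f n \<le> t ^ n"
  shows "1 \<le> t"
proof (rule ccontr)
  assume "\<not> 1 \<le> t"
  then have "(\<lambda>n. t ^ n) \<longlonglongrightarrow> 0" using assms(1) by (intro LIMSEQ_power_zero) simp
  then have "L \<le> 0" using assms(2,4) by (rule tendsto_le[OF trivial_limit_sequentially])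
  with assms(3) show False by simp
qed

lemma power_le_one_if_polynomial_bound:
  fixes t l L :: real and f :: "nat \<Rightarrow> real"
  assumes "f \<longlonglongrightarrow> L" "\<forall>\<^sub>F n in sequentially. t ^ n \<le> real n powr l * f n"
  shows "t \<le> 1"
proof (rule ccontr)
  assume "\<not> t \<le> 1"
  then have t: "1 < t" by simp
  have "(\<lambda>n. real n powr l / t ^ n) \<longlonglongrightarrow> 0" using t by real_asymp
  then have "(\<lambda>n. real n powr l / t ^ n * f n) \<longlonglongrightarrow> 0 * L" using assms(1) by (rule tendsto_mult)
  moreover have "\<forall>\<^sub>F n in sequentially. 1 \<le> real n powr l / t ^ n * f n"
    using assms(2)
  proof eventually_elim
    case (elim n)
    moreover have "0 < t ^ n" using t by simp
    ultimately show ?case by (simp add: field_simps)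
  qed
  ultimately have "1 \<le> 0 * L" by (rule tendsto_lowerbound) simp
  then show False by simp
qed

theorem proposition2p2:
  fixes M :: "'a measure" and K :: "'a \<Rightarrow> 'a measure" and c :: 'a
    and W :: "'a \<Rightarrow> real" and I :: "'i set" and \<nu>s :: "'i \<Rightarrow> 'a measure"
    and \<eta> :: "'i \<Rightarrow> 'a \<Rightarrow> real" and \<alpha> :: "nat \<Rightarrow> real" and \<nu> :: "'a measure"
  assumes chain: "markov_absorbing M K c"
    and A: "assumption_A M K c W I \<nu>s \<eta> \<alpha>"
    and nuW: "MplusW M c W \<nu>"
    and nu_qsd: "qsd M K c \<nu>"
    and nu_eta: "(\<integral>x. etaS I \<eta> x \<partial>\<nu>) > 0"
    and nu_j: "\<exists>l::real. l \<ge> 0 \<and> measure \<nu> {x \<in> Dom M c. jS M K c (return M x) \<le> l} = 1"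
  shows "\<forall>n. mass M K c \<nu> n = theta0 M K c ^ n"
proof -
  obtain l where "measure \<nu> {x \<in> Dom M c. jS M K c (return M x) \<le> l} = 1" using nu_j by blast
  moreover have "prob_space \<nu>" using nu_qsd by (simp add: qsd_def)
  ultimately have "AE x in \<nu>. x \<in> {x \<in> Dom M c. jS M K c (return M x) \<le> l}"
    by (rule prob_space.AE_prob_1[rotated])
  then have l: "AE x in \<nu>. jS M K c (return M x) \<le> l" by eventually_elim simp
  have \<eta>: "integrable \<nu> (etaS I \<eta>)"
    \<comment> \<open>a non-integrable function has Bochner integral 0\<close>
    using nu_eta not_integrable_integral_eq by fastforce
  define t where "t = mass M K c \<nu> 1 / theta0 M K c"
  have t_power: "t ^ n = mass M K c \<nu> n / theta0 M K c ^ n" for n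
    by (simp add: t_def power_divide qsd_mass_power[OF chain nu_qsd, of n])
  let ?N = "normW M c W (\<lambda>_. 1)" and ?\<eta> = "\<integral>x. etaS I \<eta> x \<partial>\<nu>" and ?W = "\<integral>x. W x \<partial>\<nu>"
  have lim: "(\<lambda>n. ?\<eta> + s * \<alpha> n * ?N * ?W) \<longlonglongrightarrow> ?\<eta>" for s :: real
    using assumption_AD(6)[OF A] by (auto intro!: tendsto_eq_intros)
  have "1 \<le> t"
  proof (rule power_ge_one_if_lower_bound[OF _ lim[of "-1"] nu_eta])
    show "0 \<le> t" using nu_qsd assumption_AD(1)[OF A] by (simp add: t_def qsd_def less_imp_le)
    show "\<forall>\<^sub>F n in sequentially. ?\<eta> + - 1 * \<alpha> n * ?N * ?W \<le> t ^ n"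
      using survival_mass_lower_bound[OF chain A nuW \<eta>]
      by (intro eventually_sequentiallyI[of 1]) (simp add: t_power)
  qed
  moreover have "t \<le> 1"
  proof (rule power_le_one_if_polynomial_bound[OF lim[of 1]])
    show "\<forall>\<^sub>F n in sequentially. t ^ n \<le> real n powr l * (?\<eta> + 1 * \<alpha> n * ?N * ?W)"
      using survival_mass_upper_bound[OF chain A nuW \<eta> _ l]
      by (intro eventually_sequentiallyI[of 1]) (simp add: t_power mult.assoc)
  qed
  ultimately have "mass M K c \<nu> 1 = theta0 M K c"
    using assumption_AD(1)[OF A] by (simp add: t_def)
  then show ?thesis using qsd_mass_power[OF chain nu_qsd] by metis
qed

end
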